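(* Let $\nu$ be a probability measure on $\mathcal{C}_n$. Then $$\mathbf{GW}(\{g_\nu(y):y\in\mathcal{C}_n\})\le\mathcal{D}(\nu).$$
   Context: $\mathcal{C}_n=\{-1,1\}^n$ with uniform probability measure $\mu$; $f=\log\frac{d\nu}{d\mu}$. For $y\in\mathcal{C}_n$, $i\in[n]$, let $y_\pm$ agree with $y$ except that the $i$-th coordinate is $\pm1$; then $g_\nu(y)\in\mathbb{R}^n$ has coordinates $\langle g_\nu(y),e_i\rangle=\frac{e^{f(y_+)}-e^{f(y_-)}}{e^{f(y_+)}+e^{f(y_-)}}$ (taken to be $0$ if $\nu(y_+)=\nu(y_-)=0$); equivalently $g_\nu(y)=\tanh(\nabla f(y))$ coordinatewise. Here $\partial_i f(y)=\frac12(f(y_+)-f(y_-))$, $\nabla f=(\partial_if)_i$, $\mathbf{GW}(K)=\mathbb{E}\sup_{x\in K}\langle x,\Gamma\rangle$ with $\Gamma\sim N(0,\mathrm{Id}_n)$, and $\mathcal{D}(\nu)=\mathbf{GW}(\{\nabla f(y):y\in\mathcal{C}_n\}\cup\{0\})$. *)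

theory Defs
  imports "HOL-Probability.Probability"
begin

definition cube :: "(real^'n) set" where
  "cube = {y. \<forall>i. y $ i \<in> {-1, 1}}"

text \<open>y with i-th coordinate set to s (s = 1 gives y_+, s = -1 gives y_-).\<close>
definition setc :: "real^'n \<Rightarrow> 'n \<Rightarrow> real \<Rightarrow> real^'n" where
  "setc y i s = (\<chi> j. if j = i then s else y $ j)"

text \<open>Density d nu / d mu w.r.t. the uniform probability measure mu on the cube.\<close>
definition dens :: "(real^'n) pmf \<Rightarrow> real^'n \<Rightarrow> real" where
  "dens nu y = 2 ^ CARD('n) * pmf nu y"

text \<open>f = log (d nu / d mu) (used where the density is positive).\<close>
definition logdens :: "(real^'n) pmf \<Rightarrow> real^'n \<Rightarrow> real" where
  "logdens nu y = ln (dens nu y)"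

definition g_nu :: "(real^'n) pmf \<Rightarrow> real^'n \<Rightarrow> real^'n" where
  "g_nu nu y = (\<chi> i. let a = dens nu (setc y i 1); b = dens nu (setc y i (-1)) in
       if a = 0 \<and> b = 0 then 0 else (a - b) / (a + b))"

definition grad_f :: "(real^'n) pmf \<Rightarrow> real^'n \<Rightarrow> real^'n" where
  "grad_f nu y = (\<chi> i. (logdens nu (setc y i 1) - logdens nu (setc y i (-1))) / 2)"

definition std_gauss :: "(real^'n) measure" where
  "std_gauss = distr (PiM UNIV (\<lambda>_::'n. density lborel std_normal_density)) borel
                     (\<lambda>\<omega>. \<chi> i. \<omega> i)"

definition GW :: "(real^'n) set \<Rightarrow> real" where
  "GW K = (\<integral>G. (SUP x\<in>K. x \<bullet> G) \<partial>std_gauss)"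

text \<open>If nu lacks full support then f takes the value -infinity
  at some point adjacent to a point of positive mass, so some gradient has an infinite coordinate
  and D(nu) = +infinity; otherwise it is the (finite) Gaussian width.\<close>
definition D_nu :: "(real^'n) pmf \<Rightarrow> ereal" where
  "D_nu nu = (if \<forall>y\<in>cube. pmf nu y > 0
              then ereal (GW (grad_f nu ` cube \<union> {0}))
              else \<infinity>)"

end

theory Submission
  imports Defs
begin

text \<open>Since \<open>g_\<nu> = tanh \<circ> \<nabla>f\<close> coordinatewise and \<open>tanh\<close> is 1-Lipschitz, the claim is an instance
  of the Gaussian contraction principle: replacing the \<open>i\<close>-th coordinate of every point of a finite
  set \<open>T\<close> by a 1-Lipschitz image does not increase \<open>E sup\<^sub>t\<^sub>\<in>\<^sub>T \<langle>t, \<Gamma>\<rangle>\<close>. To see this, let \<open>\<Gamma>'\<close> be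
  \<open>\<Gamma>\<close> with its \<open>i\<close>-th coordinate negated, which has the same law. The sum
  \<open>sup\<^sub>t \<langle>u\<^sub>t, \<Gamma>\<rangle> + sup\<^sub>s \<langle>u\<^sub>s, \<Gamma>'\<rangle>\<close> is attained at a pair \<open>(t, s)\<close>, where it equals the common
  part plus \<open>(u\<^sub>t - u\<^sub>s)\<^sub>i \<Gamma>\<^sub>i\<close>; this is dominated by \<open>\<plusminus>(v\<^sub>t - v\<^sub>s)\<^sub>i \<Gamma>\<^sub>i\<close>, so by the
  value of the same sum for \<open>v\<close> at \<open>(t, s)\<close> or \<open>(s, t)\<close>. Taking expectations and applying this
  coordinate by coordinate gives the bound by the Gaussian width of the gradients; adding \<open>0\<close> only
  enlarges the supremum, and if \<open>\<nu>\<close> lacks full support then \<open>\<D>(\<nu>) = \<infinity>\<close>.\<close>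

section \<open>Reflection invariance of the standard Gaussian\<close>

abbreviation std_normal :: "real measure" where
  "std_normal \<equiv> density lborel std_normal_density"

lemma distr_std_normal_uminus: "distr std_normal borel uminus = std_normal"
proof -
  have "distr (density (distr lborel borel uminus) (\<lambda>x. ennreal (std_normal_density x))) lborel uminus
        = density lborel ((\<lambda>x. ennreal (std_normal_density x)) \<circ> uminus)"
    by (rule distr_density_distr) auto
  moreover have "(\<lambda>x. ennreal (std_normal_density x)) \<circ> uminus = (\<lambda>x. ennreal (std_normal_density x))"
    by (auto simp: normal_density_def)
  moreover have "distr std_normal lborel uminus = distr std_normal borel uminus"
    by (rule distr_cong) auto
  ultimately show ?thesis by (simp add: lborel_distr_uminus)
qed

lemma emeasure_std_normal_uminus_vimage:
  "A \<in> sets borel \<Longrightarrow> emeasure std_normal (uminus -` A) = emeasure std_normal A"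
  by (subst (2) distr_std_normal_uminus[symmetric]) (simp add: emeasure_distr)

definition reflect_fun :: "'i \<Rightarrow> ('i \<Rightarrow> real) \<Rightarrow> 'i \<Rightarrow> real" where
  "reflect_fun i \<omega> = fun_upd \<omega> i (- \<omega> i)"

lemma measurable_reflect_fun:
  "reflect_fun i \<in> measurable (PiM UNIV (\<lambda>_::'i::finite. std_normal)) (PiM UNIV (\<lambda>_. std_normal))"
proof -
  have "reflect_fun i = (\<lambda>\<omega> j. if j = i then - \<omega> i else \<omega> j)"
    by (auto simp: reflect_fun_def fun_eq_iff)
  also have "\<dots> \<in> measurable (PiM UNIV (\<lambda>_::'i. std_normal)) (PiM UNIV (\<lambda>_. std_normal))"
    by (rule measurable_PiM_single') (auto simp: space_PiM)
  finally show ?thesis .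
qed

lemma distr_PiM_std_normal_reflect_fun:
  "distr (PiM UNIV (\<lambda>_::'i::finite. std_normal)) (PiM UNIV (\<lambda>_. std_normal)) (reflect_fun i)
   = PiM UNIV (\<lambda>_. std_normal)"
  (is "distr ?P ?P _ = _")
proof -
  interpret product_prob_space "\<lambda>_::'i. std_normal" UNIV
    by (intro product_prob_spaceI) (simp add: prob_space_normal_density)
  show ?thesis
  proof (rule PiM_eqI)
    fix A assume A: "\<And>j. j \<in> (UNIV::'i set) \<Longrightarrow> A j \<in> sets std_normal"
    define A' where "A' j = (if j = i then uminus -` A j else A j)" for j
    have pre: "reflect_fun i -` Pi\<^sub>E UNIV A \<inter> space ?P = Pi\<^sub>E UNIV A'"
      by (auto simp: reflect_fun_def A'_def space_PiM PiE_def Pi_def extensional_def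
          split: if_splits)
    have A': "A' j \<in> sets std_normal" for j
      using A measurable_sets[of "uminus::real\<Rightarrow>real" borel borel "A i"] by (auto simp: A'_def)
    have "emeasure (distr ?P ?P (reflect_fun i)) (Pi\<^sub>E UNIV A)
        = emeasure ?P (reflect_fun i -` Pi\<^sub>E UNIV A \<inter> space ?P)"
      using A by (intro emeasure_distr measurable_reflect_fun sets_PiM_I_finite) auto
    also have "\<dots> = (\<Prod>j\<in>UNIV. emeasure std_normal (A' j))"
      unfolding pre using A' by (intro emeasure_PiM) auto
    also have "\<dots> = (\<Prod>j\<in>UNIV. emeasure std_normal (A j))"
      using A by (intro prod.cong) (auto simp: A'_def emeasure_std_normal_uminus_vimage)
    finally show "emeasure (distr ?P ?P (reflect_fun i)) (Pi\<^sub>E UNIV A)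
        = (\<Prod>j\<in>UNIV. emeasure std_normal (A j))" .
  qed simp_all
qed

lemma measurable_vec_lambda_PiM:
  "(\<lambda>\<omega>. \<chi> i. \<omega> i) \<in> borel_measurable (PiM UNIV (\<lambda>_::'n::finite. std_normal))"
proof (rule borel_measurable_euclidean_space[THEN iffD2], intro ballI)
  fix b :: "real^'n" assume "b \<in> Basis"
  then obtain j where b: "b = axis j 1" by (auto simp: Basis_vec_def)
  have "(\<lambda>\<omega>. \<omega> j) \<in> measurable (PiM UNIV (\<lambda>_::'n. std_normal)) std_normal"
    by (rule measurable_component_singleton) simp
  then show "(\<lambda>\<omega>. (\<chi> i. \<omega> i) \<bullet> b) \<in> borel_measurable (PiM UNIV (\<lambda>_::'n. std_normal))"
    by (simp add: b inner_axis cong: measurable_cong_sets)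
qed

definition reflect :: "'n \<Rightarrow> real^'n \<Rightarrow> real^'n" where
  "reflect i G = (\<chi> j. if j = i then - G $ j else G $ j)"

lemma borel_measurable_reflect: "reflect (i::'n::finite) \<in> borel_measurable borel"
  unfolding reflect_def
proof (intro borel_measurable_continuous_onI continuous_on_vec_lambda)
  fix j
  have "continuous_on UNIV (\<lambda>x::real^'n. x $ j)"
    by (rule continuous_on_component[OF continuous_on_id])
  then show "continuous_on UNIV (\<lambda>x::real^'n. if j = i then - x $ j else x $ j)"
    by (cases "j = i") (auto intro: continuous_on_minus)
qed

lemma sets_std_gauss: "sets std_gauss = sets borel"
  by (simp add: std_gauss_def)

lemma distr_std_gauss_reflect: "distr std_gauss borel (reflect i) = std_gauss"
proof -
  let ?P = "PiM UNIV (\<lambda>_::'n::finite. std_normal)"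
  have "reflect i \<circ> (\<lambda>\<omega>. \<chi> i. \<omega> i) = (\<lambda>\<omega>. \<chi> i. \<omega> i) \<circ> reflect_fun i"
    by (auto simp: reflect_def reflect_fun_def fun_eq_iff)
  then have "distr std_gauss borel (reflect i) = distr ?P borel ((\<lambda>\<omega>. \<chi> i. \<omega> i) \<circ> reflect_fun i)"
    unfolding std_gauss_def
    by (subst distr_distr) (auto intro: borel_measurable_reflect measurable_vec_lambda_PiM)
  also have "\<dots> = distr (distr ?P ?P (reflect_fun i)) borel (\<lambda>\<omega>. \<chi> i. \<omega> i)"
    by (subst distr_distr) (auto intro: measurable_vec_lambda_PiM measurable_reflect_fun)
  also have "\<dots> = std_gauss"
    unfolding distr_PiM_std_normal_reflect_fun std_gauss_def ..
  finally show ?thesis .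
qed

lemma
  fixes F :: "real^'n::finite \<Rightarrow> real"
  assumes F: "integrable std_gauss F"
  shows integrable_std_gauss_reflect: "integrable std_gauss (\<lambda>G. F (reflect i G))"
    and integral_std_gauss_reflect: "(\<integral>G. F (reflect i G) \<partial>std_gauss) = (\<integral>G. F G \<partial>std_gauss)"
proof -
  have R: "reflect i \<in> measurable std_gauss borel"
    using borel_measurable_reflect measurable_cong_sets[OF sets_std_gauss refl] by blast
  have Fm: "F \<in> borel_measurable borel"
    using borel_measurable_integrable[OF F] measurable_cong_sets[OF sets_std_gauss refl] by blast
  show "integrable std_gauss (\<lambda>G. F (reflect i G))"
    using F by (simp add: integrable_distr_eq[OF R Fm, symmetric] distr_std_gauss_reflect)
  show "(\<integral>G. F (reflect i G) \<partial>std_gauss) = (\<integral>G. F G \<partial>std_gauss)"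
    by (simp add: integral_distr[OF R Fm, symmetric] distr_std_gauss_reflect)
qed

section \<open>Integrability of suprema of linear functionals\<close>

lemma integrable_std_gauss_component: "integrable std_gauss (\<lambda>G::real^'n::finite. G $ j)"
proof -
  let ?P = "PiM UNIV (\<lambda>_::'n. std_normal)"
  have "integrable lborel (\<lambda>x. std_normal_density x * x ^ 1)"
    by (rule integrable_std_normal_moment)
  then have "integrable std_normal (\<lambda>x. x)"
    by (subst integrable_density) auto
  moreover have "distr ?P std_normal (\<lambda>\<omega>. \<omega> j) = std_normal"
    by (rule distr_PiM_component) (auto simp: prob_space_normal_density)
  ultimately have "integrable (distr ?P std_normal (\<lambda>\<omega>. \<omega> j)) (\<lambda>x. x)"
    by simp
  then have "integrable ?P (\<lambda>\<omega>. \<omega> j)"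
    by (subst (asm) integrable_distr_eq) auto
  then show ?thesis
    unfolding std_gauss_def by (subst integrable_distr_eq) (auto intro: measurable_vec_lambda_PiM)
qed

lemma integrable_std_gauss_inner: "integrable std_gauss (\<lambda>G::real^'n::finite. u \<bullet> G)"
  unfolding inner_vec_def inner_real_def
  by (intro Bochner_Integration.integrable_sum Bochner_Integration.integrable_mult_right
      integrable_std_gauss_component)

lemma integrable_std_gauss_SUP_inner:
  fixes u :: "'a \<Rightarrow> real^'n::finite"
  assumes "finite T" "T \<noteq> {}"
  shows "integrable std_gauss (\<lambda>G. SUP t\<in>T. u t \<bullet> G)"
  using assms
proof (induction T rule: finite_ne_induct)
  case (singleton x)
  then show ?case by (simp add: integrable_std_gauss_inner)
next
  case (insert x F)
  then have "(\<lambda>G. SUP t\<in>insert x F. u t \<bullet> G) = (\<lambda>G. max (u x \<bullet> G) (SUP t\<in>F. u t \<bullet> G))"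
    by (simp add: cSup_insert sup_max)
  then show ?case by (simp add: integrable_max integrable_std_gauss_inner insert.IH)
qed

lemma GW_mono:
  fixes K L :: "(real^'n::finite) set"
  assumes "K \<subseteq> L" "finite L" "K \<noteq> {}"
  shows "GW K \<le> GW L"
  unfolding GW_def
proof (rule integral_mono)
  show "integrable std_gauss (\<lambda>G. SUP x\<in>K. x \<bullet> G)" "integrable std_gauss (\<lambda>G. SUP x\<in>L. x \<bullet> G)"
    using assms integrable_std_gauss_SUP_inner[of _ "\<lambda>x. x"] by (auto dest: finite_subset)
  show "(SUP x\<in>K. x \<bullet> G) \<le> (SUP x\<in>L. x \<bullet> G)" for G
    using assms by (intro cSUP_subset_mono) auto
qed

section \<open>The contraction principle\<close>

lemma SUP_add_SUP_le:
  fixes f g :: "'a \<Rightarrow> real"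
  assumes "finite T" "T \<noteq> {}" and "\<And>t s. t \<in> T \<Longrightarrow> s \<in> T \<Longrightarrow> f t + g s \<le> C"
  shows "(SUP t\<in>T. f t) + (SUP s\<in>T. g s) \<le> C"
proof -
  have "(SUP s\<in>T. g s) \<le> C - f t" if "t \<in> T" for t
    using assms that by (intro cSUP_least) (auto simp: algebra_simps)
  then have "f t \<le> C - (SUP s\<in>T. g s)" if "t \<in> T" for t
    using that by fastforce
  then have "(SUP t\<in>T. f t) \<le> C - (SUP s\<in>T. g s)"
    using assms by (intro cSUP_least) auto
  then show ?thesis by simp
qed

lemma inner_eq_component_add_sum:
  "(w::real^'n::finite) \<bullet> G = w $ i * G $ i + (\<Sum>j\<in>UNIV-{i}. w $ j * G $ j)"
  unfolding inner_vec_def inner_real_def by (simp add: sum.remove[of UNIV i])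

lemma inner_reflect_eq_component_add_sum:
  "(w::real^'n::finite) \<bullet> reflect i G = - (w $ i * G $ i) + (\<Sum>j\<in>UNIV-{i}. w $ j * G $ j)"
  unfolding inner_vec_def inner_real_def by (simp add: sum.remove[of UNIV i] reflect_def)

lemma SUP_inner_add_SUP_inner_reflect_contraction:
  fixes u v :: "'a \<Rightarrow> real^'n::finite"
  assumes T: "finite T" "T \<noteq> {}"
    and same: "\<And>t j. t \<in> T \<Longrightarrow> j \<noteq> i \<Longrightarrow> u t $ j = v t $ j"
    and lip: "\<And>t s. t \<in> T \<Longrightarrow> s \<in> T \<Longrightarrow> \<bar>u t $ i - u s $ i\<bar> \<le> \<bar>v t $ i - v s $ i\<bar>"
  shows "(SUP t\<in>T. u t \<bullet> G) + (SUP t\<in>T. u t \<bullet> reflect i G)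
       \<le> (SUP t\<in>T. v t \<bullet> G) + (SUP t\<in>T. v t \<bullet> reflect i G)"
proof (rule SUP_add_SUP_le[OF T])
  fix t s assume ts: "t \<in> T" "s \<in> T"
  define rest where "rest w = (\<Sum>j\<in>UNIV-{i}. w $ j * G $ j)" for w :: "real^'n"
  have "rest (u r) = rest (v r)" if "r \<in> T" for r
    unfolding rest_def using same[OF that] by (intro sum.cong) auto
  then have u: "u t \<bullet> G + u s \<bullet> reflect i G = rest (v t) + rest (v s) + (u t $ i - u s $ i) * G $ i"
    using ts by (simp only: inner_reflect_eq_component_add_sum)
      (simp add: inner_eq_component_add_sum[of _ _ i] rest_def algebra_simps)
  have v: "v t \<bullet> G + v s \<bullet> reflect i G = rest (v t) + rest (v s) + (v t $ i - v s $ i) * G $ i"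
    and v': "v s \<bullet> G + v t \<bullet> reflect i G = rest (v t) + rest (v s) - (v t $ i - v s $ i) * G $ i"
    by (simp_all only: inner_reflect_eq_component_add_sum)
      (simp_all add: inner_eq_component_add_sum[of _ _ i] rest_def algebra_simps)
  have "(u t $ i - u s $ i) * G $ i \<le> \<bar>u t $ i - u s $ i\<bar> * \<bar>G $ i\<bar>"
    by (metis abs_ge_self abs_mult)
  also have "\<dots> \<le> \<bar>v t $ i - v s $ i\<bar> * \<bar>G $ i\<bar>"
    using lip[OF ts] by (rule mult_right_mono) simp
  finally have "(u t $ i - u s $ i) * G $ i \<le> \<bar>(v t $ i - v s $ i) * G $ i\<bar>"
    by (simp add: abs_mult)
  then have "(u t $ i - u s $ i) * G $ i \<le> (v t $ i - v s $ i) * G $ i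
      \<or> (u t $ i - u s $ i) * G $ i \<le> - ((v t $ i - v s $ i) * G $ i)"
    by (cases "(v t $ i - v s $ i) * G $ i \<ge> 0") auto
  moreover have "v t \<bullet> G + v s \<bullet> reflect i G \<le> (SUP t\<in>T. v t \<bullet> G) + (SUP t\<in>T. v t \<bullet> reflect i G)"
    and "v s \<bullet> G + v t \<bullet> reflect i G \<le> (SUP t\<in>T. v t \<bullet> G) + (SUP t\<in>T. v t \<bullet> reflect i G)"
    using ts T by (intro add_mono cSUP_upper; simp)+
  ultimately show "u t \<bullet> G + u s \<bullet> reflect i G \<le> (SUP t\<in>T. v t \<bullet> G) + (SUP t\<in>T. v t \<bullet> reflect i G)"
    unfolding u v v' by linarith
qed

lemma integral_SUP_inner_contraction_component:
  fixes u v :: "'a \<Rightarrow> real^'n::finite"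
  assumes T: "finite T" "T \<noteq> {}"
    and same: "\<And>t j. t \<in> T \<Longrightarrow> j \<noteq> i \<Longrightarrow> u t $ j = v t $ j"
    and lip: "\<And>t s. t \<in> T \<Longrightarrow> s \<in> T \<Longrightarrow> \<bar>u t $ i - u s $ i\<bar> \<le> \<bar>v t $ i - v s $ i\<bar>"
  shows "(\<integral>G. (SUP t\<in>T. u t \<bullet> G) \<partial>std_gauss) \<le> (\<integral>G. (SUP t\<in>T. v t \<bullet> G) \<partial>std_gauss)"
proof -
  define Fu where "Fu G = (SUP t\<in>T. u t \<bullet> G)" for G
  define Fv where "Fv G = (SUP t\<in>T. v t \<bullet> G)" for G
  have iu: "integrable std_gauss Fu" and iv: "integrable std_gauss Fv"
    unfolding Fu_def Fv_def by (rule integrable_std_gauss_SUP_inner[OF T])+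
  have "2 * (\<integral>G. Fu G \<partial>std_gauss) = (\<integral>G. Fu G + Fu (reflect i G) \<partial>std_gauss)"
    using iu by (simp add: integrable_std_gauss_reflect integral_std_gauss_reflect)
  also have "\<dots> \<le> (\<integral>G. Fv G + Fv (reflect i G) \<partial>std_gauss)"
  proof (rule integral_mono)
    show "integrable std_gauss (\<lambda>G. Fu G + Fu (reflect i G))"
      "integrable std_gauss (\<lambda>G. Fv G + Fv (reflect i G))"
      using iu iv by (simp_all add: integrable_std_gauss_reflect)
    show "Fu G + Fu (reflect i G) \<le> Fv G + Fv (reflect i G)" for G
      unfolding Fu_def Fv_def by (rule SUP_inner_add_SUP_inner_reflect_contraction[OF T same lip])
  qed
  also have "\<dots> = 2 * (\<integral>G. Fv G \<partial>std_gauss)"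
    using iv by (simp add: integrable_std_gauss_reflect integral_std_gauss_reflect)
  finally show ?thesis unfolding Fu_def Fv_def by simp
qed

lemma integral_SUP_inner_contraction:
  fixes v :: "'a \<Rightarrow> real^'n::finite" and \<phi> :: "'n \<Rightarrow> real \<Rightarrow> real"
  assumes T: "finite T" "T \<noteq> {}" and lip: "\<And>j x y. \<bar>\<phi> j x - \<phi> j y\<bar> \<le> \<bar>x - y\<bar>"
  shows "(\<integral>G. (SUP t\<in>T. (\<chi> j. \<phi> j (v t $ j)) \<bullet> G) \<partial>std_gauss)
       \<le> (\<integral>G. (SUP t\<in>T. v t \<bullet> G) \<partial>std_gauss)"
proof -
  define w where "w S t = (\<chi> j. if j \<in> S then \<phi> j (v t $ j) else v t $ j)" for S t
  have "(\<integral>G. (SUP t\<in>T. w S t \<bullet> G) \<partial>std_gauss) \<le> (\<integral>G. (SUP t\<in>T. v t \<bullet> G) \<partial>std_gauss)"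
    if "finite S" for S
    using that
  proof (induction S rule: finite_induct)
    case empty
    then show ?case by (simp add: w_def)
  next
    case (insert i S)
    have "(\<integral>G. (SUP t\<in>T. w (insert i S) t \<bullet> G) \<partial>std_gauss) \<le> (\<integral>G. (SUP t\<in>T. w S t \<bullet> G) \<partial>std_gauss)"
      using insert.hyps by (intro integral_SUP_inner_contraction_component[OF T, where i = i])
        (auto simp: w_def lip)
    with insert.IH show ?case by linarith
  qed
  from this[of UNIV] show ?thesis by (simp add: w_def)
qed

section \<open>The discrete gradient and \<open>g_\<nu>\<close>\<close>

lemma finite_cube: "finite cube"
proof (rule finite_subset)
  show "cube \<subseteq> vec_lambda ` PiE (UNIV::'n::finite set) (\<lambda>_. {-1, 1::real})"
  proof
    fix y :: "real^'n" assume "y \<in> cube"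
    then have "vec_nth y \<in> PiE UNIV (\<lambda>_. {-1, 1})" by (auto simp: cube_def)
    then show "y \<in> vec_lambda ` PiE UNIV (\<lambda>_. {-1, 1})" by (metis image_eqI vec_nth_inverse)
  qed
qed (intro finite_imageI finite_PiE; simp)

lemma cube_nonempty: "cube \<noteq> {}"
proof -
  have "(\<chi> i. 1) \<in> cube" by (simp add: cube_def)
  then show ?thesis by blast
qed

lemma setc_in_cube: "y \<in> cube \<Longrightarrow> s \<in> {-1, 1} \<Longrightarrow> setc y i s \<in> cube"
  by (auto simp: cube_def setc_def)

lemma abs_tanh_diff_le: "\<bar>tanh x - tanh y\<bar> \<le> \<bar>x - y\<bar>" for x y :: real
proof -
  have mono: "x - tanh x \<le> y - tanh y" if "x \<le> y" for x y :: real
  proof (rule DERIV_nonneg_imp_nondecreasing[OF that])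
    fix z :: real
    have "cosh z \<noteq> 0" using cosh_real_pos[of z] by simp
    then have "(tanh has_real_derivative 1 - tanh z ^ 2) (at z)"
      using has_field_derivative_tanh[OF _ DERIV_ident, of z] by simp
    then have "((\<lambda>x. x - tanh x) has_real_derivative 1 - (1 - tanh z ^ 2)) (at z)"
      by (intro DERIV_diff DERIV_ident)
    then show "\<exists>d. ((\<lambda>x. x - tanh x) has_real_derivative d) (at z) \<and> 0 \<le> d" by fastforce
  qed
  have "\<bar>tanh x - tanh y\<bar> \<le> \<bar>x - y\<bar>" if "x \<le> y" for x y :: real
    using that mono[OF that] by (auto simp: abs_if)
  from this[of x y] this[of y x] show ?thesis
    by (cases "x \<le> y") (auto simp: abs_minus_commute)
qed

lemma diff_divide_add_eq_tanh_ln: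
  fixes a b :: real
  assumes "0 < a" "0 < b"
  shows "(a - b) / (a + b) = tanh ((ln a - ln b) / 2)"
proof -
  have "- 2 * ((ln a - ln b) / 2) = ln b - ln a" by simp
  then have "exp (- 2 * ((ln a - ln b) / 2)) = b / a"
    using assms by (simp only:) (simp add: exp_diff)
  moreover have "1 - b / a = (a - b) / a" "1 + b / a = (a + b) / a"
    using assms by (simp_all add: diff_divide_distrib add_divide_distrib)
  ultimately show ?thesis
    using assms unfolding tanh_real_altdef by simp
qed

lemma g_nu_eq_tanh_grad_f:
  assumes "\<forall>y\<in>cube. pmf nu y > 0" and "y \<in> cube"
  shows "g_nu nu y = (\<chi> j. tanh (grad_f nu y $ j))"
proof -
  have "dens nu (setc y j s) > 0" if "s \<in> {-1, 1}" for j s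
    using assms setc_in_cube[OF assms(2) that] by (simp add: dens_def)
  then show ?thesis
    by (simp add: vec_eq_iff g_nu_def grad_f_def logdens_def Let_def diff_divide_add_eq_tanh_ln)
qed

theorem lemma3p4:
  fixes nu :: "(real^'n) pmf"
  assumes "set_pmf nu \<subseteq> cube"
  shows "ereal (GW (g_nu nu ` cube)) \<le> D_nu nu"
proof (cases "\<forall>y\<in>cube. pmf nu y > 0")
  case False
  then show ?thesis by (simp only: D_nu_def if_not_P) simp
next
  case True
  have "g_nu nu ` cube = (\<lambda>y. \<chi> j. tanh (grad_f nu y $ j)) ` cube"
    using g_nu_eq_tanh_grad_f[OF True] by (rule image_cong[OF refl])
  then have "GW (g_nu nu ` cube)
      = (\<integral>G. (SUP y\<in>cube. (\<chi> j. tanh (grad_f nu y $ j)) \<bullet> G) \<partial>std_gauss)"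
    by (simp add: GW_def image_image)
  also have "\<dots> \<le> (\<integral>G. (SUP y\<in>cube. grad_f nu y \<bullet> G) \<partial>std_gauss)"
    by (rule integral_SUP_inner_contraction[OF finite_cube cube_nonempty abs_tanh_diff_le])
  also have "\<dots> = GW (grad_f nu ` cube)"
    by (simp add: GW_def image_image)
  also have "\<dots> \<le> GW (grad_f nu ` cube \<union> {0})"
    using finite_cube cube_nonempty by (intro GW_mono) auto
  finally show ?thesis
    using True by (simp add: D_nu_def)
qed

end
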